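(* Let $[a,b]\subset\mathbb{R}$ be a compact interval, $N\geq 1$, and let $X_N$ be an $N$-dimensional linear subspace of $C^{N-1}[a,b]$. Then there exists a sequence $(X_N^m)_{m\geq1}$ of $N$-dimensional linear subspaces of $C^{N-1}[a,b]$ such that: (1) for every $m$ there is a finite subdivision $a\leq t_0<t_1<\dots<t_{p_m}=b$ of $[a,b]$ such that, for every $j$, the restriction of $X_N^m$ to the open subinterval $(t_j,t_{j+1})$ is an ECT-space on $(t_j,t_{j+1})$; (2) $U(X_N^m)\to U(X_N)$ as $m\to\infty$ in the metric of $C^{N-1}[a,b]$, where $U(Y)$ denotes the unit ball of the space $Y$.
   Context: For an open interval $J\subset\mathbb{R}$, a linear subspace $X_N\subset C^{N-1}(J)$ of dimension $N$ is called an ECT-space (Extended Complete Chebyshev space) on $J$ if it has a basis $v_1,\dots,v_N$ whose consecutive Wronskians satisfy $W(v_1,\dots,v_k)(t)>0$ for all $t\in J$ and all $k=1,\dots,N$. Here $W(v_1,\dots,v_k)=\det\big(v_i^{(l)}\big)_{1\le i\le k,\,0\le l\le k-1}$. The unit balls are taken in the norm of $C^{N-1}[a,b]$, and convergence of unit balls is meant in the (Hausdorff) metric induced by the $C^{N-1}[a,b]$ norm. *)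

theory Defs
  imports Complex_Main "Jordan_Normal_Form.Determinant"
begin

definition has_derivs_on :: "real set \<Rightarrow> nat \<Rightarrow> (real \<Rightarrow> real) \<Rightarrow> (nat \<Rightarrow> real \<Rightarrow> real) \<Rightarrow> bool" where
  "has_derivs_on S k f D \<longleftrightarrow>
     (\<forall>x\<in>S. D 0 x = f x) \<and>
     (\<forall>i<k. \<forall>x\<in>S. (D i has_real_derivative D (Suc i) x) (at x within S)) \<and>
     (\<forall>i\<le>k. continuous_on S (D i))"

text \<open>Elements of C^k[a,b] are represented by functions vanishing outside [a,b].\<close>
definition Cspace :: "real \<Rightarrow> real \<Rightarrow> nat \<Rightarrow> (real \<Rightarrow> real) set" where
  "Cspace a b k = {f. (\<exists>D. has_derivs_on {a..b} k f D) \<and> (\<forall>x. x \<notin> {a..b} \<longrightarrow> f x = 0)}"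

text \<open>i-th derivative of f on [a,b] (well defined for a < b and f in C^i[a,b]).\<close>
definition dth :: "real \<Rightarrow> real \<Rightarrow> nat \<Rightarrow> (real \<Rightarrow> real) \<Rightarrow> real \<Rightarrow> real" where
  "dth a b i f = (SOME D. has_derivs_on {a..b} i f D) i"

definition Cnorm :: "real \<Rightarrow> real \<Rightarrow> nat \<Rightarrow> (real \<Rightarrow> real) \<Rightarrow> real" where
  "Cnorm a b k f = Sup {\<bar>dth a b i f x\<bar> | i x. i \<le> k \<and> x \<in> {a..b}}"

definition dim_subspace :: "real \<Rightarrow> real \<Rightarrow> nat \<Rightarrow> (real \<Rightarrow> real) set \<Rightarrow> bool" where
  "dim_subspace a b N X \<longleftrightarrow>
     (\<exists>v :: nat \<Rightarrow> real \<Rightarrow> real.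
        (\<forall>i<N. v i \<in> Cspace a b (N - 1)) \<and>
        (\<forall>c. (\<forall>x\<in>{a..b}. (\<Sum>i<N. c i * v i x) = 0) \<longrightarrow> (\<forall>i<N. c i = 0)) \<and>
        X = {(\<lambda>x. \<Sum>i<N. c i * v i x) | c. True})"

definition wronskian :: "real \<Rightarrow> real \<Rightarrow> nat \<Rightarrow> (nat \<Rightarrow> real \<Rightarrow> real) \<Rightarrow> real \<Rightarrow> real" where
  "wronskian a b k v t = det (mat k k (\<lambda>(i, l). dth a b l (v i) t))"

definition ECT_restr :: "real \<Rightarrow> real \<Rightarrow> nat \<Rightarrow> (real \<Rightarrow> real) set \<Rightarrow> real set \<Rightarrow> bool" where
  "ECT_restr a b N X J \<longleftrightarrow>
     (\<exists>v :: nat \<Rightarrow> real \<Rightarrow> real.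
        (\<forall>i<N. v i \<in> X) \<and>
        (\<forall>f\<in>X. \<exists>c. \<forall>t\<in>J. f t = (\<Sum>i<N. c i * v i t)) \<and>
        (\<forall>k\<in>{1..N}. \<forall>t\<in>J. wronskian a b k v t > 0))"

definition unit_ball_C :: "real \<Rightarrow> real \<Rightarrow> nat \<Rightarrow> (real \<Rightarrow> real) set \<Rightarrow> (real \<Rightarrow> real) set" where
  "unit_ball_C a b k Y = {f \<in> Y. Cnorm a b k f \<le> 1}"

definition hausdorff_C :: "real \<Rightarrow> real \<Rightarrow> nat \<Rightarrow> (real \<Rightarrow> real) set \<Rightarrow> (real \<Rightarrow> real) set \<Rightarrow> real" where
  "hausdorff_C a b k A B =
     max (SUP f\<in>A. INF g\<in>B. Cnorm a b k (\<lambda>x. f x - g x))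
         (SUP g\<in>B. INF f\<in>A. Cnorm a b k (\<lambda>x. f x - g x))"

end

theory Submission
  imports Defs "HOL-Analysis.Analysis" "Jordan_Normal_Form.Char_Poly"
begin

hide_const (open) Finite_Cartesian_Product.mat Determinants.det Finite_Cartesian_Product.vec
hide_type (open) Finite_Cartesian_Product.vec

text \<open>Approximate a basis \<open>v 0, \<dots>, v (N - 1)\<close> of \<open>X\<close>, together with its derivatives up to
  order \<open>N - 1\<close>, by polynomials in \<open>x - a\<close> (Weierstrass' theorem for the top derivative, then
  repeated integration), perturbed so that their jet matrix at \<open>a\<close> is invertible. After a change
  of basis this matrix becomes the identity, so the Wronskian of each initial segment of the new
  basis is a polynomial taking the value \<open>1\<close> at \<open>a\<close>. Between consecutive zeros of these finitely
  many polynomials every Wronskian has constant sign, and changing the signs of the basis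
  elements makes all of them positive. Closeness of the bases carries over to the unit balls
  because, by interpolation at \<open>N\<close> unisolvent points, the coefficients of an element of \<open>X\<close> are
  bounded by its norm.\<close>

section \<open>Derivative chains and the norm of \<open>C\<^sup>k[a,b]\<close>\<close>

lemma has_derivs_on_mono: "has_derivs_on S k f D \<Longrightarrow> i \<le> k \<Longrightarrow> has_derivs_on S i f D"
  unfolding has_derivs_on_def by auto

lemma has_derivs_on_unique:
  assumes ab: "a < b" and D: "has_derivs_on {a..b} k f D" and E: "has_derivs_on {a..b} k f E"
    and "i \<le> k" and "x \<in> {a..b}"
  shows "D i x = E i x"
  using assms(4,5)
proof (induction i arbitrary: x)
  case 0
  then show ?case using D E unfolding has_derivs_on_def by auto
next
  case (Suc i)
  have dD: "(D i has_real_derivative D (Suc i) x) (at x within {a..b})"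
    using D Suc.prems unfolding has_derivs_on_def by auto
  have eq: "D i y = E i y" if "y \<in> {a..b}" for y using Suc that by simp
  have "(E i has_real_derivative D (Suc i) x) (at x within {a..b})"
    by (rule has_field_derivative_transform_within[where d=1, OF dD]) (use Suc.prems eq in auto)
  moreover have "(E i has_real_derivative E (Suc i) x) (at x within {a..b})"
    using E Suc.prems unfolding has_derivs_on_def by auto
  moreover have "at x within {a..b} \<noteq> bot"
    using ab Suc.prems by (simp add: trivial_limit_within islimpt_Icc)
  ultimately show ?case by (rule has_field_derivative_unique)
qed

lemma dth_eq:
  assumes ab: "a < b" and D: "has_derivs_on {a..b} k f D" and "i \<le> k" and "x \<in> {a..b}"
  shows "dth a b i f x = D i x"
proof -
  have Di: "has_derivs_on {a..b} i f D" using has_derivs_on_mono[OF D \<open>i \<le> k\<close>] .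
  then have "has_derivs_on {a..b} i f (SOME D. has_derivs_on {a..b} i f D)"
    by (rule someI[where P="has_derivs_on {a..b} i f"])
  from has_derivs_on_unique[OF ab this Di order_refl \<open>x \<in> {a..b}\<close>] show ?thesis
    unfolding dth_def .
qed

lemma has_derivs_on_bounded:
  fixes N :: nat
  assumes "\<And>j. j < N \<Longrightarrow> has_derivs_on {a..b} k (f j) (D j)"
  shows "\<exists>B. \<forall>j<N. \<forall>i\<le>k. \<forall>x\<in>{a..b}. \<bar>D j i x\<bar> \<le> B"
proof -
  have "bounded (\<Union>(j, i)\<in>{..<N} \<times> {..k}. D j i ` {a..b})"
  proof (rule bounded_UN, safe)
    fix j i assume "j < N" "i \<le> k"
    then have "continuous_on {a..b} (D j i)" using assms unfolding has_derivs_on_def by auto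
    then show "bounded (D j i ` {a..b})" by (intro compact_imp_bounded compact_continuous_image) auto
  qed simp
  then obtain B where "\<forall>y\<in>(\<Union>(j, i)\<in>{..<N} \<times> {..k}. D j i ` {a..b}). \<bar>y\<bar> \<le> B"
    unfolding bounded_real by blast
  then show ?thesis by fastforce
qed

lemma Cnorm_eq_Sup:
  assumes "a < b" and "has_derivs_on {a..b} k f D"
  shows "Cnorm a b k f = Sup {\<bar>D i x\<bar> | i x. i \<le> k \<and> x \<in> {a..b}}"
  unfolding Cnorm_def using dth_eq[OF assms] by (intro arg_cong[where f=Sup]) force

lemma Cnorm_ge_deriv:
  assumes ab: "a < b" and D: "has_derivs_on {a..b} k f D" and "i \<le> k" and "x \<in> {a..b}"
  shows "\<bar>D i x\<bar> \<le> Cnorm a b k f"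
proof -
  have "\<exists>B. \<forall>j<(1::nat). \<forall>i\<le>k. \<forall>x\<in>{a..b}. \<bar>D i x\<bar> \<le> B"
    by (rule has_derivs_on_bounded[of 1 a b k "\<lambda>_. f" "\<lambda>_. D"]) (use D in simp)
  then obtain B where B: "\<forall>i\<le>k. \<forall>x\<in>{a..b}. \<bar>D i x\<bar> \<le> B" by auto
  have "bdd_above {\<bar>D i x\<bar> | i x. i \<le> k \<and> x \<in> {a..b}}"
    by (rule bdd_aboveI[where M=B]) (use B in auto)
  moreover have "\<bar>D i x\<bar> \<in> {\<bar>D i x\<bar> | i x. i \<le> k \<and> x \<in> {a..b}}"
    using assms(3,4) by blast
  ultimately show ?thesis
    unfolding Cnorm_eq_Sup[OF ab D] by (intro cSup_upper)
qed

lemma Cnorm_le: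
  assumes ab: "a < b" and D: "has_derivs_on {a..b} k f D"
    and B: "\<And>i x. i \<le> k \<Longrightarrow> x \<in> {a..b} \<Longrightarrow> \<bar>D i x\<bar> \<le> B"
  shows "Cnorm a b k f \<le> B"
  unfolding Cnorm_eq_Sup[OF ab D]
  by (rule cSup_least) (use ab B in \<open>auto intro!: exI[of _ 0] exI[of _ a]\<close>)

lemma Cnorm_nonneg:
  assumes "a < b" and "has_derivs_on {a..b} k f D"
  shows "0 \<le> Cnorm a b k f"
  using Cnorm_ge_deriv[OF assms, of 0 a] \<open>a < b\<close> by auto

lemma has_derivs_on_sum:
  assumes "\<And>j. j < M \<Longrightarrow> has_derivs_on S k (f j) (D j)"
  shows "has_derivs_on S k (\<lambda>x. \<Sum>j<M. c j * f j x) (\<lambda>i x. \<Sum>j<M. c j * D j i x)"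
  using assms unfolding has_derivs_on_def
  by (auto intro!: DERIV_sum DERIV_cmult continuous_intros sum.cong)

lemma has_derivs_on_add:
  "has_derivs_on S k f D \<Longrightarrow> has_derivs_on S k g E \<Longrightarrow>
   has_derivs_on S k (\<lambda>x. f x + g x) (\<lambda>i x. D i x + E i x)"
  unfolding has_derivs_on_def by (auto intro!: DERIV_add continuous_intros)

lemma has_derivs_on_diff:
  "has_derivs_on S k f D \<Longrightarrow> has_derivs_on S k g E \<Longrightarrow>
   has_derivs_on S k (\<lambda>x. f x - g x) (\<lambda>i x. D i x - E i x)"
  unfolding has_derivs_on_def by (auto intro!: DERIV_diff continuous_intros)

lemma has_derivs_on_cmult:
  "has_derivs_on S k f D \<Longrightarrow> has_derivs_on S k (\<lambda>x. c * f x) (\<lambda>i x. c * D i x)"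
  unfolding has_derivs_on_def by (auto intro!: DERIV_cmult continuous_intros)

lemma Cnorm_add_le:
  assumes ab: "a < b" and f: "has_derivs_on {a..b} k f D" and g: "has_derivs_on {a..b} k g E"
  shows "Cnorm a b k (\<lambda>x. f x + g x) \<le> Cnorm a b k f + Cnorm a b k g"
  by (rule Cnorm_le[OF ab has_derivs_on_add[OF f g]], rule order_trans[OF abs_triangle_ineq])
    (intro add_mono Cnorm_ge_deriv[OF ab f] Cnorm_ge_deriv[OF ab g]; assumption)

lemma Cnorm_cmult_le:
  assumes ab: "a < b" and f: "has_derivs_on {a..b} k f D"
  shows "Cnorm a b k (\<lambda>x. c * f x) \<le> \<bar>c\<bar> * Cnorm a b k f"
  by (rule Cnorm_le[OF ab has_derivs_on_cmult[OF f]])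
    (simp add: abs_mult mult_left_mono Cnorm_ge_deriv[OF ab f])

lemma Cnorm_minus_commute:
  assumes ab: "a < b" and f: "has_derivs_on {a..b} k f D" and g: "has_derivs_on {a..b} k g E"
  shows "Cnorm a b k (\<lambda>x. f x - g x) = Cnorm a b k (\<lambda>x. g x - f x)"
proof -
  have le: "Cnorm a b k (\<lambda>x. g x - f x) \<le> Cnorm a b k (\<lambda>x. f x - g x)"
    if "has_derivs_on {a..b} k f D" "has_derivs_on {a..b} k g E" for f g D E
    using Cnorm_cmult_le[OF ab has_derivs_on_diff[OF that], of "-1"] by simp
  show ?thesis using le[OF f g] le[OF g f] by simp
qed

lemma Cnorm_rescale_into_unit_ball:
  assumes ab: "a < b" and f: "has_derivs_on {a..b} k f D" and g: "has_derivs_on {a..b} k g E"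
    and f1: "Cnorm a b k f \<le> 1"
  defines "r \<equiv> Cnorm a b k (\<lambda>x. f x - g x)"
  shows "Cnorm a b k (\<lambda>x. g x / (1 + r)) \<le> 1"
    and "Cnorm a b k (\<lambda>x. f x - g x / (1 + r)) \<le> 2 * r"
proof -
  have fg: "has_derivs_on {a..b} k (\<lambda>x. f x - g x) (\<lambda>i x. D i x - E i x)"
    by (rule has_derivs_on_diff[OF f g])
  have r0: "0 \<le> r" unfolding r_def by (rule Cnorm_nonneg[OF ab fg])
  have "Cnorm a b k g \<le> Cnorm a b k f + Cnorm a b k (\<lambda>x. g x - f x)"
    using Cnorm_add_le[OF ab f has_derivs_on_diff[OF g f]] by simp
  then have g1: "Cnorm a b k g \<le> 1 + r"
    using f1 Cnorm_minus_commute[OF ab f g] unfolding r_def by linarith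
  have "Cnorm a b k (\<lambda>x. (1 / (1 + r)) * g x) \<le> 1 / (1 + r) * Cnorm a b k g"
    using Cnorm_cmult_le[OF ab g, of "1 / (1 + r)"] r0 by simp
  also have "\<dots> \<le> 1" using g1 r0 by (simp add: field_simps)
  finally show "Cnorm a b k (\<lambda>x. g x / (1 + r)) \<le> 1" by simp
  have "(\<lambda>x. f x - g x / (1 + r)) = (\<lambda>x. (f x - g x) + r / (1 + r) * g x)"
    using r0 by (auto simp: field_simps)
  then have "Cnorm a b k (\<lambda>x. f x - g x / (1 + r))
      \<le> Cnorm a b k (\<lambda>x. f x - g x) + Cnorm a b k (\<lambda>x. r / (1 + r) * g x)"
    by (simp only:) (rule Cnorm_add_le[OF ab fg has_derivs_on_cmult[OF g]])
  also have "\<dots> \<le> r + r / (1 + r) * Cnorm a b k g"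
    using Cnorm_cmult_le[OF ab g, of "r / (1 + r)"] r0 unfolding r_def by simp
  also have "\<dots> \<le> r + r / (1 + r) * (1 + r)" using g1 r0 by (intro add_left_mono mult_left_mono) auto
  finally show "Cnorm a b k (\<lambda>x. f x - g x / (1 + r)) \<le> 2 * r" using r0 by simp
qed

section \<open>Polynomial approximation in \<open>C\<^sup>n[a,b]\<close>\<close>

text \<open>The polynomial \<open>P\<close> in the variable \<open>x - a\<close>, extended by zero outside \<open>[a,b]\<close> as
  \<open>Cspace\<close> requires.\<close>
definition poly_on :: "real \<Rightarrow> real \<Rightarrow> real poly \<Rightarrow> real \<Rightarrow> real" where
  "poly_on a b P x = (if x \<in> {a..b} then poly P (x - a) else 0)"

lemma has_real_derivative_poly_shift:
  "((\<lambda>x. poly P (x - a)) has_real_derivative poly (pderiv P) (x - a)) (at x within S)"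
proof -
  have "((\<lambda>x. poly P (x - a)) has_real_derivative poly (pderiv P) (x - a) * 1) (at x)"
    by (rule DERIV_chain2[OF poly_DERIV]) (auto intro!: derivative_eq_intros)
  then show ?thesis by (simp add: has_field_derivative_at_within)
qed

lemma has_derivs_on_poly_on:
  "has_derivs_on {a..b} k (poly_on a b P) (\<lambda>i x. poly ((pderiv ^^ i) P) (x - a))"
  unfolding has_derivs_on_def poly_on_def
  by (auto intro!: has_real_derivative_poly_shift continuous_intros)

lemma poly_on_Cspace: "poly_on a b P \<in> Cspace a b k"
  unfolding Cspace_def using has_derivs_on_poly_on[where k=k] by (auto simp: poly_on_def)

lemma poly_on_lincomb:
  "poly_on a b (\<Sum>j<N. smult (c j) (P j)) x = (\<Sum>j<N. c j * poly_on a b (P j) x)"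
  by (auto simp: poly_on_def poly_sum)

lemma poly_higher_pderiv_0: "poly ((pderiv ^^ l) p) 0 = fact l * coeff (p :: real poly) l"
  by (simp add: poly_0_coeff_0 coeff_higher_pderiv pochhammer_fact)

definition poly_antideriv :: "real \<Rightarrow> real poly \<Rightarrow> real poly" where
  "poly_antideriv c P = pCons c (Poly (map (\<lambda>i. coeff P i / real (Suc i)) [0..<Suc (degree P)]))"

lemma poly_poly_antideriv_0: "poly (poly_antideriv c P) 0 = c"
  by (simp add: poly_antideriv_def)

lemma pderiv_poly_antideriv: "pderiv (poly_antideriv c P) = P"
proof (rule poly_eqI)
  fix n
  have "coeff (poly_antideriv c P) (Suc n) =
        nth_default 0 (map (\<lambda>i. coeff P i / real (Suc i)) [0..<Suc (degree P)]) n"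
    unfolding poly_antideriv_def by (simp only: coeff_pCons_Suc coeff_Poly_eq)
  also have "\<dots> = (if n \<le> degree P then coeff P n / real (Suc n) else 0)"
    unfolding nth_default_def by (simp only: length_map length_upt) (auto simp del: upt_Suc)
  finally show "coeff (pderiv (poly_antideriv c P)) n = coeff P n"
    using coeff_eq_0[of P n] by (auto simp: coeff_pderiv)
qed

lemma real_polynomial_function_imp_poly:
  "real_polynomial_function (g :: real \<Rightarrow> real) \<Longrightarrow> \<exists>G. g = poly G"
proof (induction rule: real_polynomial_function.induct)
  case (linear f)
  have "f x = poly [:0, f 1:] x" for x
    using linear_scale_real[OF bounded_linear.linear[OF linear], of x 1] by simp
  then show ?case by blast
next
  case (const c)
  show ?case by (intro exI[of _ "[:c:]"]) auto
next
  case (add f g)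
  then obtain F G where "f = poly F" "g = poly G" by blast
  then show ?case by (intro exI[of _ "F + G"]) auto
next
  case (mult f g)
  then obtain F G where "f = poly F" "g = poly G" by blast
  then show ?case by (intro exI[of _ "F * G"]) auto
qed

lemma poly_antideriv_approx:
  assumes f': "\<And>y. y \<in> {a..b} \<Longrightarrow> (f has_real_derivative f' y) (at y within {a..b})"
    and close: "\<And>y. y \<in> {a..b} \<Longrightarrow> \<bar>f' y - poly R (y - a)\<bar> \<le> \<eta>"
    and x: "x \<in> {a..b}"
  shows "\<bar>f x - poly (poly_antideriv (f a) R) (x - a)\<bar> \<le> \<eta> * (b - a)"
proof -
  define g where "g y = f y - poly (poly_antideriv (f a) R) (y - a)" for y
  have "((\<lambda>y. poly (poly_antideriv (f a) R) (y - a)) has_real_derivative poly R (y - a))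
      (at y within {a..b})" for y
    using has_real_derivative_poly_shift[of "poly_antideriv (f a) R" a] by (simp add: pderiv_poly_antideriv)
  then have "(g has_real_derivative f' y - poly R (y - a)) (at y within {a..b})" if "y \<in> {a..b}" for y
    unfolding g_def by (rule DERIV_diff[OF f'[OF that]])
  then have "norm (g x - g a) \<le> \<eta> * norm (x - a)"
    using close x by (intro field_differentiable_bound[OF convex_real_interval(5)]) auto
  moreover have "g a = 0" unfolding g_def by (simp add: poly_poly_antideriv_0)
  moreover have "\<eta> * norm (x - a) \<le> \<eta> * (b - a)"
    using close[of a] x by (intro mult_left_mono) auto
  ultimately show ?thesis unfolding g_def by simp
qed

lemma has_derivs_on_shift: "has_derivs_on S (Suc k) f D \<Longrightarrow> has_derivs_on S k (D 1) (\<lambda>i. D (Suc i))"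
  unfolding has_derivs_on_def by auto

lemma poly_integrate_approx:
  assumes "has_derivs_on {a..b} n f D"
    and "\<And>x. x \<in> {a..b} \<Longrightarrow> \<bar>D n x - poly G (x - a)\<bar> \<le> \<eta>"
  shows "\<exists>P. \<forall>i\<le>n. \<forall>x\<in>{a..b}. \<bar>D i x - poly ((pderiv ^^ i) P) (x - a)\<bar> \<le> \<eta> * (b - a) ^ (n - i)"
  using assms
proof (induction n arbitrary: f D)
  case 0
  then show ?case by (intro exI[of _ G]) auto
next
  case (Suc m)
  have "\<exists>P. \<forall>i\<le>m. \<forall>x\<in>{a..b}.
      \<bar>D (Suc i) x - poly ((pderiv ^^ i) P) (x - a)\<bar> \<le> \<eta> * (b - a) ^ (m - i)"
    by (rule Suc.IH[OF has_derivs_on_shift[OF Suc.prems(1)]]) (use Suc.prems(2) in simp)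
  then obtain P where P: "\<forall>i\<le>m. \<forall>x\<in>{a..b}.
      \<bar>D (Suc i) x - poly ((pderiv ^^ i) P) (x - a)\<bar> \<le> \<eta> * (b - a) ^ (m - i)"
    by blast
  have D0: "(D 0 has_real_derivative D (Suc 0) y) (at y within {a..b})" if "y \<in> {a..b}" for y
    using Suc.prems(1) that unfolding has_derivs_on_def by blast
  show ?case
  proof (intro exI[of _ "poly_antideriv (D 0 a) P"] allI impI ballI)
    fix i x assume i: "i \<le> Suc m" and x: "x \<in> {a..b}"
    show "\<bar>D i x - poly ((pderiv ^^ i) (poly_antideriv (D 0 a) P)) (x - a)\<bar> \<le> \<eta> * (b - a) ^ (Suc m - i)"
    proof (cases i)
      case 0
      have "\<bar>D (Suc 0) y - poly P (y - a)\<bar> \<le> \<eta> * (b - a) ^ m" if "y \<in> {a..b}" for y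
        using P[rule_format, of 0 y] that by simp
      from poly_antideriv_approx[OF D0 this x] 0 show ?thesis by (simp add: mult_ac)
    next
      case (Suc j)
      have "(pderiv ^^ Suc j) (poly_antideriv (D 0 a) P) = (pderiv ^^ j) P"
        by (simp only: funpow_Suc_right o_apply pderiv_poly_antideriv)
      with P Suc i x show ?thesis by simp
    qed
  qed
qed

text \<open>Approximate the top derivative by Weierstrass' theorem and integrate \<open>n\<close> times, with the
  constants of integration \<open>D i a\<close>.\<close>
lemma poly_approx_derivs:
  assumes ab: "a < b" and D: "has_derivs_on {a..b} n f D" and e: "0 < e"
  obtains P where "\<And>i x. i \<le> n \<Longrightarrow> x \<in> {a..b} \<Longrightarrow> \<bar>D i x - poly ((pderiv ^^ i) P) (x - a)\<bar> \<le> e"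
proof -
  define M where "M = max 1 (b - a)"
  define \<eta> where "\<eta> = e / M ^ n"
  have M1: "1 \<le> M" and \<eta>: "0 < \<eta>" using e by (auto simp: M_def \<eta>_def)
  have "continuous_on {a..b} (D n)" using D unfolding has_derivs_on_def by auto
  then obtain g where "real_polynomial_function g" and g: "\<And>x. x \<in> {a..b} \<Longrightarrow> \<bar>D n x - g x\<bar> < \<eta>"
    by (metis Stone_Weierstrass_real_polynomial_function[OF compact_Icc _ \<eta>])
  then obtain G where "g = poly G" using real_polynomial_function_imp_poly by blast
  with g have "\<bar>D n x - poly (G \<circ>\<^sub>p [:a, 1:]) (x - a)\<bar> \<le> \<eta>" if "x \<in> {a..b}" for x
    using that by (simp add: poly_pcompose less_imp_le)
  from poly_integrate_approx[OF D this] obtain P where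
    P: "\<forall>i\<le>n. \<forall>x\<in>{a..b}. \<bar>D i x - poly ((pderiv ^^ i) P) (x - a)\<bar> \<le> \<eta> * (b - a) ^ (n - i)"
    by blast
  have bound: "\<eta> * (b - a) ^ (n - i) \<le> e" for i
  proof -
    have "(b - a) ^ (n - i) \<le> M ^ (n - i)" using ab by (intro power_mono) (auto simp: M_def)
    also have "\<dots> \<le> M ^ n" using M1 by (intro power_increasing) auto
    finally have "\<eta> * (b - a) ^ (n - i) \<le> \<eta> * M ^ n" using \<eta> by (intro mult_left_mono) auto
    also have "\<dots> = e" unfolding \<eta>_def using M1 by simp
    finally show ?thesis .
  qed
  show ?thesis
  proof (rule that)
    fix i x assume "i \<le> n" "x \<in> {a..b}"
    with P bound[of i] show "\<bar>D i x - poly ((pderiv ^^ i) P) (x - a)\<bar> \<le> e" by (meson order_trans)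
  qed
qed

text \<open>Row \<open>j\<close> holds the derivatives of order \<open>< N\<close> of \<open>Q j\<close> at \<open>0\<close>, i.e. of
  \<open>poly_on a b (Q j)\<close> at \<open>a\<close>.\<close>
definition jet_mat :: "nat \<Rightarrow> (nat \<Rightarrow> real poly) \<Rightarrow> real mat" where
  "jet_mat N Q = mat N N (\<lambda>(j, l). poly ((pderiv ^^ l) (Q j)) 0)"

lemma jet_mat_carrier: "jet_mat N Q \<in> carrier_mat N N"
  by (simp add: jet_mat_def)

lemma exists_small_det_add_smult_one_nonzero:
  fixes M :: "real mat"
  assumes M: "M \<in> carrier_mat N N" and d: "0 < d"
  shows "\<exists>\<delta>. 0 < \<delta> \<and> \<delta> \<le> d \<and> det (M + \<delta> \<cdot>\<^sub>m 1\<^sub>m N) \<noteq> 0"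
proof -
  have "coeff (char_poly M) N = 1" using degree_monic_char_poly[OF M] by simp
  then have "finite {x. poly (char_poly M) x = 0}" by (intro poly_roots_finite) auto
  moreover have "infinite {0<..d}" using d by simp
  ultimately obtain \<delta> where \<delta>: "\<delta> \<in> {0<..d}" "poly (char_poly M) (- \<delta>) \<noteq> 0"
    by (metis (mono_tags, lifting) finite_imageI infinite_super mem_Collect_eq subsetI
        image_eqI minus_minus)
  have "det (- (M + \<delta> \<cdot>\<^sub>m 1\<^sub>m N)) \<noteq> 0"
    using \<delta>(2) M by (simp add: char_poly_matrix char_matrix_def)
  then have "det (M + \<delta> \<cdot>\<^sub>m 1\<^sub>m N) \<noteq> 0"
    using det_0_negate[of "M + \<delta> \<cdot>\<^sub>m 1\<^sub>m N" N] M by simp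
  with \<delta>(1) show ?thesis by auto
qed

text \<open>Perturbing the approximants by \<open>\<delta> (x - a)\<^sup>j / j!\<close> adds \<open>\<delta>\<close> times the identity to
  their jet matrix, which makes it invertible for suitable small \<open>\<delta>\<close>.\<close>
lemma poly_approx_family:
  assumes ab: "a < b" and Dv: "\<And>j. j < N \<Longrightarrow> has_derivs_on {a..b} n (v j) (Dv j)" and e: "0 < e"
  shows "\<exists>Q. (\<forall>j<N. \<forall>i\<le>n. \<forall>x\<in>{a..b}. \<bar>Dv j i x - poly ((pderiv ^^ i) (Q j)) (x - a)\<bar> \<le> e) \<and>
             det (jet_mat N Q) \<noteq> 0"
proof -
  have "\<forall>j. \<exists>P. j < N \<longrightarrow>
          (\<forall>i\<le>n. \<forall>x\<in>{a..b}. \<bar>Dv j i x - poly ((pderiv ^^ i) P) (x - a)\<bar> \<le> e / 2)"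
    using poly_approx_derivs[OF ab Dv, of _ "e / 2"] e by (metis half_gt_zero)
  then obtain P where P: "\<And>j i x. j < N \<Longrightarrow> i \<le> n \<Longrightarrow> x \<in> {a..b} \<Longrightarrow>
      \<bar>Dv j i x - poly ((pderiv ^^ i) (P j)) (x - a)\<bar> \<le> e / 2"
    by metis
  define w :: "nat \<Rightarrow> real poly" where "w j = monom (1 / fact j) j" for j
  have jet_w: "poly ((pderiv ^^ l) (w j)) 0 = (if j = l then 1 else 0)" for j l
    unfolding w_def poly_higher_pderiv_0 coeff_monom by simp
  have "\<exists>B. \<forall>j<N. \<forall>i\<le>n. \<forall>x\<in>{a..b}. \<bar>poly ((pderiv ^^ i) (w j)) (x - a)\<bar> \<le> B"
    by (rule has_derivs_on_bounded) (rule has_derivs_on_poly_on)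
  then obtain B where B: "\<And>j i x. j < N \<Longrightarrow> i \<le> n \<Longrightarrow> x \<in> {a..b} \<Longrightarrow>
      \<bar>poly ((pderiv ^^ i) (w j)) (x - a)\<bar> \<le> B"
    by blast
  have "0 < e / (2 * (\<bar>B\<bar> + 1))" using e by simp
  then obtain \<delta> where \<delta>: "0 < \<delta>" "\<delta> \<le> e / (2 * (\<bar>B\<bar> + 1))"
    and det: "det (jet_mat N P + \<delta> \<cdot>\<^sub>m 1\<^sub>m N) \<noteq> 0"
    using exists_small_det_add_smult_one_nonzero[OF jet_mat_carrier] by blast
  define Q where "Q j = P j + smult \<delta> (w j)" for j
  have pderiv_Q: "(pderiv ^^ i) (Q j) = (pderiv ^^ i) (P j) + smult \<delta> ((pderiv ^^ i) (w j))" for i j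
    unfolding Q_def higher_pderiv_add higher_pderiv_smult ..
  show ?thesis
  proof (intro exI[of _ Q] conjI allI impI ballI)
    fix j i x assume jix: "j < N" "i \<le> n" "x \<in> {a..b}"
    have "\<delta> * \<bar>poly ((pderiv ^^ i) (w j)) (x - a)\<bar> \<le> e / (2 * (\<bar>B\<bar> + 1)) * (\<bar>B\<bar> + 1)"
      using \<delta> B[OF jix] by (intro mult_mono) auto
    also have "\<dots> = e / 2" by (simp add: field_simps add_nonneg_pos)
    finally have w_small: "\<delta> * \<bar>poly ((pderiv ^^ i) (w j)) (x - a)\<bar> \<le> e / 2" .
    have eq: "Dv j i x - poly ((pderiv ^^ i) (Q j)) (x - a) =
        (Dv j i x - poly ((pderiv ^^ i) (P j)) (x - a)) - \<delta> * poly ((pderiv ^^ i) (w j)) (x - a)"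
      by (simp add: pderiv_Q)
    have "\<bar>Dv j i x - poly ((pderiv ^^ i) (Q j)) (x - a)\<bar>
        \<le> \<bar>Dv j i x - poly ((pderiv ^^ i) (P j)) (x - a)\<bar> + \<bar>\<delta> * poly ((pderiv ^^ i) (w j)) (x - a)\<bar>"
      unfolding eq by (rule abs_triangle_ineq4)
    then show "\<bar>Dv j i x - poly ((pderiv ^^ i) (Q j)) (x - a)\<bar> \<le> e"
      using P[OF jix] w_small \<delta>(1) by (simp add: abs_mult)
  next
    have "jet_mat N Q = jet_mat N P + \<delta> \<cdot>\<^sub>m 1\<^sub>m N"
      by (rule eq_matI) (auto simp: jet_mat_def pderiv_Q jet_w)
    then show "det (jet_mat N Q) \<noteq> 0" using det by simp
  qed
qed

section \<open>Finite-dimensional spans\<close>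

lemma sum_if_eq_mult:
  fixes g :: "nat \<Rightarrow> 'a :: semiring_1"
  assumes "j < N"
  shows "(\<Sum>k<N. (if j = k then c else 0) * g k) = c * g j"
proof -
  have "(\<Sum>k<N. (if j = k then c else 0) * g k) = (\<Sum>k<N. if j = k then c * g k else 0)"
    by (intro sum.cong) auto
  then show ?thesis using assms by simp
qed

lemma det_nonzero_inverse_coeffs:
  fixes M :: "'a :: field mat"
  assumes M: "M \<in> carrier_mat N N" and det: "det M \<noteq> 0"
  shows "\<exists>C. (\<forall>i<N. \<forall>l<N. (\<Sum>j<N. C i j * M $$ (j, l)) = (if i = l then 1 else 0)) \<and>
             (\<forall>l<N. \<forall>j<N. (\<Sum>i<N. M $$ (l, i) * C i j) = (if l = j then 1 else 0))"
proof (intro exI[of _ "\<lambda>i j. adj_mat M $$ (i, j) / det M"] conjI allI impI)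
  have A: "adj_mat M \<in> carrier_mat N N" "adj_mat M * M = det M \<cdot>\<^sub>m 1\<^sub>m N"
    "M * adj_mat M = det M \<cdot>\<^sub>m 1\<^sub>m N"
    using adj_mat[OF M] by auto
  fix i l assume il: "i < N" "l < N"
  have "(\<Sum>j<N. adj_mat M $$ (i, j) * M $$ (j, l)) = (adj_mat M * M) $$ (i, l)"
    using A(1) M il by (simp add: scalar_prod_def atLeast0LessThan)
  also have "\<dots> = det M * (if i = l then 1 else 0)" using A(2) il by simp
  finally show "(\<Sum>j<N. adj_mat M $$ (i, j) / det M * M $$ (j, l)) = (if i = l then 1 else 0)"
    using det by (simp add: sum_divide_distrib[symmetric])
  have "(\<Sum>j<N. M $$ (i, j) * adj_mat M $$ (j, l)) = (M * adj_mat M) $$ (i, l)"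
    using A(1) M il by (simp add: scalar_prod_def atLeast0LessThan)
  also have "\<dots> = det M * (if i = l then 1 else 0)" using A(3) il by simp
  finally show "(\<Sum>j<N. M $$ (i, j) * (adj_mat M $$ (j, l) / det M)) = (if i = l then 1 else 0)"
    using det by (simp add: sum_divide_distrib[symmetric])
qed

lemma det_nonzero_lincomb_rows_eq_0:
  fixes M :: "'a :: field mat"
  assumes M: "M \<in> carrier_mat N N" and det: "det M \<noteq> 0"
    and rows: "\<And>l. l < N \<Longrightarrow> (\<Sum>j<N. c j * M $$ (j, l)) = 0" and i: "i < N"
  shows "c i = 0"
proof -
  obtain C where C: "\<forall>l<N. \<forall>j<N. (\<Sum>i<N. M $$ (l, i) * C i j) = (if l = j then 1 else 0)"
    using det_nonzero_inverse_coeffs[OF M det] by blast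
  have "c i = (\<Sum>j<N. if j = i then c j else 0)" using i by simp
  also have "\<dots> = (\<Sum>j<N. c j * (\<Sum>l<N. M $$ (j, l) * C l i))"
    using i by (intro sum.cong refl) (simp add: C)
  also have "\<dots> = (\<Sum>l<N. (\<Sum>j<N. c j * M $$ (j, l)) * C l i)"
    by (simp only: sum_distrib_left sum_distrib_right mult.assoc) (rule sum.swap)
  also have "\<dots> = 0" using rows by simp
  finally show ?thesis .
qed

definition lspan :: "nat \<Rightarrow> (nat \<Rightarrow> real \<Rightarrow> real) \<Rightarrow> (real \<Rightarrow> real) set" where
  "lspan N v = {(\<lambda>x. \<Sum>i<N. c i * v i x) | c. True}"

lemma mem_lspan: "f \<in> lspan N v \<longleftrightarrow> (\<exists>c. f = (\<lambda>x. \<Sum>i<N. c i * v i x))"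
  by (simp add: lspan_def)

lemma lspan_subset:
  assumes "\<And>i x. i < N \<Longrightarrow> w i x = (\<Sum>j<N. A i j * u j x)"
  shows "lspan N w \<subseteq> lspan N u"
proof
  fix f assume "f \<in> lspan N w"
  then obtain c where f: "f = (\<lambda>x. \<Sum>i<N. c i * w i x)" unfolding mem_lspan ..
  have "f x = (\<Sum>j<N. (\<Sum>i<N. c i * A i j) * u j x)" for x
  proof -
    have "f x = (\<Sum>i<N. c i * (\<Sum>j<N. A i j * u j x))" unfolding f by (simp add: assms)
    also have "\<dots> = (\<Sum>j<N. (\<Sum>i<N. c i * A i j) * u j x)"
      by (simp only: sum_distrib_left sum_distrib_right mult.assoc) (rule sum.swap)
    finally show ?thesis .
  qed
  then show "f \<in> lspan N u"
    unfolding mem_lspan by (intro exI[of _ "\<lambda>j. \<Sum>i<N. c i * A i j"]) blast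
qed

lemma lspan_eq_if_scaled:
  assumes "\<And>i. i < N \<Longrightarrow> \<sigma> i \<noteq> 0" and "\<And>i x. i < N \<Longrightarrow> w i x = \<sigma> i * u i x"
  shows "lspan N w = lspan N u"
proof
  show "lspan N w \<subseteq> lspan N u"
    by (rule lspan_subset[where A="\<lambda>i j. if i = j then \<sigma> i else 0"]) (simp add: assms sum_if_eq_mult)
  show "lspan N u \<subseteq> lspan N w"
    by (rule lspan_subset[where A="\<lambda>i j. if i = j then 1 / \<sigma> i else 0"]) (simp add: assms sum_if_eq_mult)
qed

lemma poly_on_lincomb_eq_0:
  assumes ab: "a < b" and "\<And>x. x \<in> {a..b} \<Longrightarrow> (\<Sum>j<N. c j * poly_on a b (Q j) x) = 0"
  shows "(\<Sum>j<N. smult (c j) (Q j)) = 0"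
proof (rule ccontr)
  assume "(\<Sum>j<N. smult (c j) (Q j)) \<noteq> 0"
  note roots = poly_roots_finite[OF this]
  have "{0..b - a} \<subseteq> {y. poly (\<Sum>j<N. smult (c j) (Q j)) y = 0}"
  proof
    fix y assume y: "y \<in> {0..b - a}"
    then have "(\<Sum>j<N. c j * poly_on a b (Q j) (y + a)) = 0" using assms(2)[of "y + a"] by simp
    moreover have "poly_on a b (Q j) (y + a) = poly (Q j) y" for j using y by (simp add: poly_on_def)
    ultimately show "y \<in> {y. poly (\<Sum>j<N. smult (c j) (Q j)) y = 0}" by (simp add: poly_sum)
  qed
  moreover have "\<not> finite {0..b - a}" using ab by (intro infinite_Icc) simp
  ultimately show False using finite_subset[OF _ roots] by blast
qed

lemma dim_subspace_lspan_poly_on: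
  assumes ab: "a < b" and det: "det (jet_mat N Q) \<noteq> 0"
  shows "dim_subspace a b N (lspan N (\<lambda>j. poly_on a b (Q j)))"
  unfolding dim_subspace_def lspan_def
proof (intro exI[of _ "\<lambda>j. poly_on a b (Q j)"] conjI allI impI refl)
  fix c i assume "\<forall>x\<in>{a..b}. (\<Sum>j<N. c j * poly_on a b (Q j) x) = 0" and i: "i < N"
  then have R: "(\<Sum>j<N. smult (c j) (Q j)) = 0" by (intro poly_on_lincomb_eq_0[OF ab]) auto
  have rows: "(\<Sum>j<N. c j * jet_mat N Q $$ (j, l)) = 0" if "l < N" for l
  proof -
    have "(\<Sum>j<N. c j * jet_mat N Q $$ (j, l)) = (\<Sum>j<N. c j * poly ((pderiv ^^ l) (Q j)) 0)"
      using that by (intro sum.cong) (auto simp: jet_mat_def)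
    also have "\<dots> = poly ((pderiv ^^ l) (\<Sum>j<N. smult (c j) (Q j))) 0"
      by (simp add: higher_pderiv_sum higher_pderiv_smult poly_sum)
    finally show ?thesis by (simp add: R)
  qed
  show "c i = 0" by (rule det_nonzero_lincomb_rows_eq_0[OF jet_mat_carrier det rows i])
qed (rule poly_on_Cspace)

section \<open>Piecewise ECT-spaces\<close>

lemma det_mat_scale_rows:
  fixes g :: "nat \<Rightarrow> 'a :: comm_ring_1"
  shows "det (mat k k (\<lambda>(i, l). g i * A i l)) = (\<Prod>i<k. g i) * det (mat k k (\<lambda>(i, l). A i l))"
proof -
  have c1: "mat k k (\<lambda>(i, l). g i * A i l) \<in> carrier_mat k k" by simp
  have c2: "mat k k (\<lambda>(i, l). A i l) \<in> carrier_mat k k" by simp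
  have "det (mat k k (\<lambda>(i, l). g i * A i l)) =
        (\<Sum>p\<in>{p. p permutes {0..<k}}. signof p * (\<Prod>i = 0..<k. g i * A i (p i)))"
    unfolding det_def'[OF c1]
    by (intro sum.cong refl arg_cong2[where f="(*)"] prod.cong) (auto simp: permutes_in_image)
  also have "\<dots> = (\<Prod>i<k. g i) * (\<Sum>p\<in>{p. p permutes {0..<k}}. signof p * (\<Prod>i = 0..<k. A i (p i)))"
    by (simp add: prod.distrib mult_ac sum_distrib_left atLeast0LessThan)
  also have "(\<Sum>p\<in>{p. p permutes {0..<k}}. signof p * (\<Prod>i = 0..<k. A i (p i))) =
             det (mat k k (\<lambda>(i, l). A i l))"
    unfolding det_def'[OF c2]
    by (intro sum.cong refl arg_cong2[where f="(*)"] prod.cong) (auto simp: permutes_in_image)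
  finally show ?thesis .
qed

lemma prod_consecutive_signs:
  fixes s :: "nat \<Rightarrow> 'a :: comm_ring_1"
  assumes s0: "s 0 = 1" and sq: "\<And>i. i \<le> K \<Longrightarrow> s i * s i = 1" and "k \<le> K"
  shows "(\<Prod>i<k. s (Suc i) * s i) = s k"
  using assms(3)
proof (induction k)
  case 0
  then show ?case using s0 by simp
next
  case (Suc k)
  then have "(\<Prod>i<Suc k. s (Suc i) * s i) = s (Suc k) * (s k * s k)" by (simp add: mult_ac)
  then show ?case using sq[of k] Suc.prems by simp
qed

lemma poly_same_sign_on_interval:
  fixes p :: "real poly"
  assumes nz: "\<And>y. y \<in> {u<..<v} \<Longrightarrow> poly p y \<noteq> 0" and "y \<in> {u<..<v}" "z \<in> {u<..<v}"
  shows "0 < poly p y * poly p z"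
proof -
  have "0 < poly p y * poly p z" if yz: "y \<le> z" "y \<in> {u<..<v}" "z \<in> {u<..<v}" for y z
  proof (rule ccontr)
    assume "\<not> 0 < poly p y * poly p z"
    moreover have "poly p y * poly p z \<noteq> 0" using nz yz by simp
    ultimately have neg: "poly p y * poly p z < 0" by linarith
    have "y \<noteq> z"
    proof
      assume "y = z"
      then show False using neg by (simp add: mult_less_0_iff)
    qed
    with yz(1) have "y < z" by simp
    then obtain r where "y < r" "r < z" "poly p r = 0" using poly_IVT[OF _ neg] by blast
    then show False using nz[of r] yz by auto
  qed
  then show ?thesis using assms(2,3) by (metis linorder_le_cases mult.commute)
qed

definition wronski_poly :: "nat \<Rightarrow> (nat \<Rightarrow> real poly) \<Rightarrow> real poly" where
  "wronski_poly k P = det (mat k k (\<lambda>(i, l). (pderiv ^^ l) (P i)))"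

lemma poly_wronski_poly:
  "poly (wronski_poly k P) y = det (mat k k (\<lambda>(i, l). poly ((pderiv ^^ l) (P i)) y))"
  unfolding wronski_poly_def by (rule poly_det_cong[of _ k]) auto

lemma wronskian_poly_on:
  assumes "a < b" and "x \<in> {a..b}"
  shows "wronskian a b k (\<lambda>i. poly_on a b (P i)) x = poly (wronski_poly k P) (x - a)"
  unfolding wronskian_def poly_wronski_poly
  by (intro arg_cong[where f=det] eq_matI)
    (auto simp: dth_eq[OF assms(1) has_derivs_on_poly_on order_refl assms(2)])

lemma ECT_restr_lspan:
  assumes "\<And>k t. k \<in> {1..N} \<Longrightarrow> t \<in> J \<Longrightarrow> 0 < wronskian a b k v t"
  shows "ECT_restr a b N (lspan N v) J"
  unfolding ECT_restr_def
proof (intro exI[of _ v] conjI ballI allI impI)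
  fix i assume i: "i < N"
  have "v i x = (\<Sum>j<N. (if i = j then 1 else 0) * v j x)" for x
    using sum_if_eq_mult[OF i, of 1 "\<lambda>j. v j x"] by simp
  then show "v i \<in> lspan N v"
    unfolding mem_lspan by (intro exI[of _ "\<lambda>j. if i = j then 1 else 0"]) blast
next
  fix f assume "f \<in> lspan N v"
  then obtain c where "f = (\<lambda>x. \<Sum>i<N. c i * v i x)" unfolding mem_lspan ..
  then show "\<exists>c. \<forall>t\<in>J. f t = (\<Sum>i<N. c i * v i t)" by blast
qed (rule assms)

text \<open>On a subinterval free of zeros of the Wronskian polynomials, let \<open>s k\<close> be the sign of
  the \<open>k\<close>-th one; scaling the \<open>i\<close>-th basis element by \<open>\<sigma> i = s (i + 1) * s i\<close> scales the
  \<open>k\<close>-th Wronskian by \<open>\<sigma> 0 * \<dots> * \<sigma> (k - 1) = s k\<close>.\<close>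
lemma ECT_restr_lspan_poly_on:
  assumes ab: "a < b" and uv: "u < v" "{u<..<v} \<subseteq> {a..b}"
    and nz: "\<And>k y. k \<in> {1..N} \<Longrightarrow> y \<in> {u<..<v} \<Longrightarrow> poly (wronski_poly k P) (y - a) \<noteq> 0"
  shows "ECT_restr a b N (lspan N (\<lambda>i. poly_on a b (P i))) {u<..<v}"
proof -
  define mid where "mid = (u + v) / 2"
  have mid: "mid \<in> {u<..<v}" using uv by (simp add: mid_def)
  define s where "s k = (if k = 0 then 1 else sgn (poly (wronski_poly k P) (mid - a)))" for k
  have s_sq: "s k * s k = 1" if "k \<le> N" for k
    using nz[OF _ mid, of k] that by (cases "k = 0") (auto simp: s_def sgn_if)
  define \<sigma> where "\<sigma> i = s (Suc i) * s i" for i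
  have "\<sigma> i * \<sigma> i = (s (Suc i) * s (Suc i)) * (s i * s i)" for i
    by (simp add: \<sigma>_def mult_ac)
  then have \<sigma>_sq: "\<sigma> i * \<sigma> i = 1" if "i < N" for i using s_sq[of i] s_sq[of "Suc i"] that by simp
  define V where "V i = poly_on a b (smult (\<sigma> i) (P i))" for i
  have "lspan N V = lspan N (\<lambda>i. poly_on a b (P i))"
  proof (rule lspan_eq_if_scaled)
    show "\<sigma> i \<noteq> 0" if "i < N" for i using \<sigma>_sq[OF that] by auto
  qed (simp add: V_def poly_on_def)
  moreover have "ECT_restr a b N (lspan N V) {u<..<v}"
  proof (rule ECT_restr_lspan)
    fix k x assume k: "k \<in> {1..N}" and x: "x \<in> {u<..<v}"
    have "wronskian a b k V x = poly (wronski_poly k (\<lambda>i. smult (\<sigma> i) (P i))) (x - a)"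
      unfolding V_def by (rule wronskian_poly_on[OF ab]) (use x uv in auto)
    also have "\<dots> = (\<Prod>i<k. \<sigma> i) * poly (wronski_poly k P) (x - a)"
      unfolding poly_wronski_poly higher_pderiv_smult poly_smult by (rule det_mat_scale_rows)
    also have "(\<Prod>i<k. \<sigma> i) = s k"
      unfolding \<sigma>_def by (rule prod_consecutive_signs[of s N]) (use s_sq k in \<open>auto simp: s_def\<close>)
    finally have W: "wronskian a b k V x = s k * poly (wronski_poly k P) (x - a)" .
    have "poly (wronski_poly k P) y \<noteq> 0" if "y \<in> {u - a<..<v - a}" for y
      using nz[OF k, of "y + a"] that by auto
    from poly_same_sign_on_interval[OF this, where y="x - a" and z="mid - a"]
    have "0 < poly (wronski_poly k P) (x - a) * poly (wronski_poly k P) (mid - a)"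
      using x mid by auto
    then show "0 < wronskian a b k V x"
      unfolding W using k by (auto simp: s_def sgn_if zero_less_mult_iff)
  qed
  ultimately show ?thesis by simp
qed

lemma finite_subdivision:
  fixes T :: "real set"
  assumes fin: "finite T" and sub: "T \<subseteq> {a..b}" and "a \<in> T" "b \<in> T"
  shows "\<exists>p t. t 0 = a \<and> t p = b \<and> (\<forall>j<p. t j < t (Suc j)) \<and> (\<forall>j\<le>p. t j \<in> T) \<and>
               (\<forall>j<p. {t j<..<t (Suc j)} \<inter> T = {})"
proof -
  define xs where "xs = sorted_list_of_set T"
  have sw: "sorted_wrt (<) xs" unfolding xs_def by (rule strict_sorted_list_of_set)
  have set: "set xs = T" unfolding xs_def using fin by simp
  define p where "p = length xs - 1"
  have len: "length xs = Suc p" unfolding p_def using set \<open>a \<in> T\<close> by (cases xs) auto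
  have lt: "xs ! i < xs ! j" if "i < j" "j \<le> p" for i j
    using sorted_wrt_nth_less[OF sw, of i j] that len by simp
  have le: "xs ! i \<le> xs ! j" if "i \<le> j" "j \<le> p" for i j
    using lt[of i j] that by (cases "i = j") auto
  have mem: "xs ! j \<in> T" if "j \<le> p" for j using set len that by (metis less_Suc_eq_le nth_mem)
  have idx: "\<exists>k\<le>p. xs ! k = y" if "y \<in> T" for y
    using that set len by (metis in_set_conv_nth less_Suc_eq_le)
  obtain ka kb where ka: "ka \<le> p" "xs ! ka = a" and kb: "kb \<le> p" "xs ! kb = b"
    using idx \<open>a \<in> T\<close> \<open>b \<in> T\<close> by blast
  have "xs ! 0 = a" using le[of 0 ka] ka mem[of 0] sub by fastforce
  moreover have "xs ! p = b" using le[of kb p] kb mem[of p] sub by fastforce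
  moreover have "{xs ! j<..<xs ! Suc j} \<inter> T = {}" if j: "j < p" for j
  proof -
    have "y \<notin> {xs ! j<..<xs ! Suc j}" if y: "y \<in> T" for y
    proof -
      obtain k where "k \<le> p" "xs ! k = y" using idx[OF y] by blast
      then show ?thesis using le[of k j] le[of "Suc j" k] j by (cases "k \<le> j") auto
    qed
    then show ?thesis by blast
  qed
  ultimately show ?thesis using lt mem by (intro exI[of _ p] exI[of _ "\<lambda>j. xs ! j"]) auto
qed

definition piecewise_ECT :: "real \<Rightarrow> real \<Rightarrow> nat \<Rightarrow> (real \<Rightarrow> real) set \<Rightarrow> bool" where
  "piecewise_ECT a b N X \<longleftrightarrow>
     (\<exists>(p::nat) (t::nat \<Rightarrow> real). t 0 = a \<and> t p = b \<and> (\<forall>j<p. t j < t (Suc j)) \<and>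
        (\<forall>j<p. ECT_restr a b N X {t j<..<t (Suc j)}))"

text \<open>With the identity as jet matrix every Wronskian polynomial takes the value \<open>1\<close> at \<open>0\<close>,
  so it has only finitely many zeros.\<close>
lemma piecewise_ECT_lspan_poly_on_normalized:
  assumes ab: "a < b" and jet: "jet_mat N P = 1\<^sub>m N"
  shows "piecewise_ECT a b N (lspan N (\<lambda>i. poly_on a b (P i)))"
proof -
  have jet_entry: "poly ((pderiv ^^ l) (P i)) 0 = (if i = l then 1 else 0)" if "i < N" "l < N" for i l
    using arg_cong[OF jet, of "\<lambda>M. M $$ (i, l)"] that by (simp add: jet_mat_def)
  have "wronski_poly k P \<noteq> 0" if "k \<le> N" for k
  proof -
    have "mat k k (\<lambda>(i, l). poly ((pderiv ^^ l) (P i)) 0) = 1\<^sub>m k"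
      by (rule eq_matI) (use that in \<open>auto simp: jet_entry\<close>)
    then have "poly (wronski_poly k P) 0 = 1" unfolding poly_wronski_poly by simp
    then show ?thesis by auto
  qed
  then have fin: "finite (\<Union>k\<in>{1..N}. {y. poly (wronski_poly k P) y = 0})"
    by (auto intro!: poly_roots_finite)
  define T where
    "T = {a, b} \<union> ({a<..<b} \<inter> (\<lambda>y. y + a) ` (\<Union>k\<in>{1..N}. {y. poly (wronski_poly k P) y = 0}))"
  have "finite T" unfolding T_def using fin by simp
  moreover have "T \<subseteq> {a..b}" unfolding T_def using ab by auto
  moreover have "a \<in> T" "b \<in> T" unfolding T_def by blast+
  ultimately have "\<exists>p t. t 0 = a \<and> t p = b \<and> (\<forall>j<p. t j < t (Suc j)) \<and> (\<forall>j\<le>p. t j \<in> T) \<and>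
      (\<forall>j<p. {t j<..<t (Suc j)} \<inter> T = {})"
    by (rule finite_subdivision)
  then obtain p t where t0: "t 0 = a" and tp: "t p = b" and tlt: "\<forall>j<p. t j < t (Suc j)"
    and tT: "\<forall>j\<le>p. t j \<in> T" and gap: "\<forall>j<p. {t j<..<t (Suc j)} \<inter> T = {}"
    by blast
  have "ECT_restr a b N (lspan N (\<lambda>i. poly_on a b (P i))) {t j<..<t (Suc j)}" if j: "j < p" for j
  proof (rule ECT_restr_lspan_poly_on[OF ab])
    have "t j \<in> T" "t (Suc j) \<in> T" using tT j by auto
    with \<open>T \<subseteq> {a..b}\<close> have tj: "a \<le> t j" "t (Suc j) \<le> b" by auto
    then show "{t j<..<t (Suc j)} \<subseteq> {a..b}" by auto
    fix k y assume k: "k \<in> {1..N}" and y: "y \<in> {t j<..<t (Suc j)}"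
    have "y \<in> {a<..<b}" using y tj by auto
    show "poly (wronski_poly k P) (y - a) \<noteq> 0"
    proof
      assume "poly (wronski_poly k P) (y - a) = 0"
      with k \<open>y \<in> {a<..<b}\<close> have "y \<in> T"
        unfolding T_def by (auto intro!: image_eqI[of _ _ "y - a"])
      then show False using gap j y by blast
    qed
  qed (use tlt j in auto)
  then show ?thesis unfolding piecewise_ECT_def using t0 tp tlt by blast
qed

lemma piecewise_ECT_lspan_poly_on:
  assumes ab: "a < b" and det: "det (jet_mat N Q) \<noteq> 0"
  shows "piecewise_ECT a b N (lspan N (\<lambda>j. poly_on a b (Q j)))"
proof -
  obtain C where CJ: "\<forall>i<N. \<forall>l<N. (\<Sum>j<N. C i j * jet_mat N Q $$ (j, l)) = (if i = l then 1 else 0)"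
    and JC: "\<forall>l<N. \<forall>j<N. (\<Sum>i<N. jet_mat N Q $$ (l, i) * C i j) = (if l = j then 1 else 0)"
    using det_nonzero_inverse_coeffs[OF jet_mat_carrier det] by blast
  define E where "E i = (\<Sum>j<N. smult (C i j) (Q j))" for i
  have "jet_mat N E = 1\<^sub>m N"
  proof (rule eq_matI)
    fix i l assume "i < dim_row (1\<^sub>m N :: real mat)" "l < dim_col (1\<^sub>m N :: real mat)"
    then have il: "i < N" "l < N" by auto
    have "jet_mat N E $$ (i, l) = (\<Sum>j<N. C i j * jet_mat N Q $$ (j, l))"
      using il by (simp add: jet_mat_def E_def higher_pderiv_sum higher_pderiv_smult poly_sum)
    then show "jet_mat N E $$ (i, l) = 1\<^sub>m N $$ (i, l)" using CJ il by simp
  qed (auto simp: jet_mat_def)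
  moreover have "lspan N (\<lambda>i. poly_on a b (E i)) = lspan N (\<lambda>j. poly_on a b (Q j))"
  proof
    show "lspan N (\<lambda>i. poly_on a b (E i)) \<subseteq> lspan N (\<lambda>j. poly_on a b (Q j))"
      by (rule lspan_subset[where A=C]) (simp add: E_def poly_on_lincomb)
    show "lspan N (\<lambda>j. poly_on a b (Q j)) \<subseteq> lspan N (\<lambda>i. poly_on a b (E i))"
    proof (rule lspan_subset[where A="\<lambda>l i. jet_mat N Q $$ (l, i)"])
      fix l x assume l: "l < N"
      have "(\<Sum>i<N. jet_mat N Q $$ (l, i) * poly_on a b (E i) x) =
            (\<Sum>i<N. \<Sum>j<N. jet_mat N Q $$ (l, i) * C i j * poly_on a b (Q j) x)"
        by (simp add: E_def poly_on_lincomb sum_distrib_left mult.assoc)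
      also have "\<dots> = (\<Sum>j<N. (\<Sum>i<N. jet_mat N Q $$ (l, i) * C i j) * poly_on a b (Q j) x)"
        by (subst sum.swap) (simp only: sum_distrib_right)
      also have "\<dots> = poly_on a b (Q l) x"
        using JC l by (simp add: sum_if_eq_mult)
      finally show "poly_on a b (Q l) x = (\<Sum>i<N. jet_mat N Q $$ (l, i) * poly_on a b (E i) x)" ..
    qed
  qed
  ultimately show ?thesis using piecewise_ECT_lspan_poly_on_normalized[OF ab] by metis
qed

section \<open>Closeness of unit balls\<close>

definition unisolvent :: "(nat \<Rightarrow> real \<Rightarrow> real) \<Rightarrow> nat \<Rightarrow> (nat \<Rightarrow> real) \<Rightarrow> bool" where
  "unisolvent v k x \<longleftrightarrow> (\<forall>c. (\<forall>j<k. (\<Sum>i<k. c i * v i (x j)) = 0) \<longrightarrow> (\<forall>i<k. c i = 0))"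

lemma not_unisolvent_Suc:
  assumes inj: "unisolvent v k x" and "\<not> unisolvent v (Suc k) (x(k := y))"
  shows "\<exists>e. e k = 1 \<and> (\<forall>j<k. (\<Sum>i<Suc k. e i * v i (x j)) = 0) \<and> (\<Sum>i<Suc k. e i * v i y) = 0"
proof -
  from assms(2) obtain c where c: "\<forall>j<Suc k. (\<Sum>i<Suc k. c i * v i ((x(k := y)) j)) = 0"
    and nz: "\<exists>i<Suc k. c i \<noteq> 0" unfolding unisolvent_def by blast
  have c_x: "(\<Sum>i<Suc k. c i * v i (x j)) = 0" if "j < k" for j
    using c[rule_format, of j] that by simp
  have c_y: "(\<Sum>i<Suc k. c i * v i y) = 0" using c[rule_format, of k] by simp
  have "c k \<noteq> 0"
  proof
    assume "c k = 0"
    then have "\<forall>i<k. c i = 0" using inj c_x unfolding unisolvent_def by simp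
    with \<open>c k = 0\<close> nz show False using less_Suc_eq by auto
  qed
  then show ?thesis
    using c_x c_y by (intro exI[of _ "\<lambda>i. c i / c k"]) (simp add: sum_divide_distrib[symmetric])
qed

lemma unisolvent_dependency_unique:
  assumes inj: "unisolvent v k x"
    and e: "e k = 1" "\<And>j. j < k \<Longrightarrow> (\<Sum>i<Suc k. e i * v i (x j)) = 0"
    and e': "e' k = 1" "\<And>j. j < k \<Longrightarrow> (\<Sum>i<Suc k. e' i * v i (x j)) = 0"
    and "i < k"
  shows "e i = e' i"
proof -
  have "(\<Sum>i<k. (e i - e' i) * v i (x j)) = 0" if "j < k" for j
  proof -
    have "(\<Sum>i<k. (e i - e' i) * v i (x j)) =
          (\<Sum>i<Suc k. e i * v i (x j)) - (\<Sum>i<Suc k. e' i * v i (x j))"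
      using e(1) e'(1) by (simp add: sum_subtractf left_diff_distrib)
    then show ?thesis using e(2) e'(2) that by simp
  qed
  then show ?thesis using inj \<open>i < k\<close> unfolding unisolvent_def by fastforce
qed

text \<open>Greedy choice of interpolation points: if no point of \<open>[a,b]\<close> extended the unisolvent
  points, the normalised dependency would be the same for all \<open>y\<close> and thus vanish on \<open>[a,b]\<close>.\<close>
lemma exists_unisolvent_points:
  assumes "a \<le> b"
    and indep: "\<forall>c. (\<forall>x\<in>{a..b}. (\<Sum>i<N. c i * v i x) = 0) \<longrightarrow> (\<forall>i<N. c i = 0)"
  shows "k \<le> N \<Longrightarrow> \<exists>x. (\<forall>j<k. x j \<in> {a..b}) \<and> unisolvent v k x"
proof (induction k)
  case 0
  then show ?case by (auto simp: unisolvent_def)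
next
  case (Suc k)
  then obtain x where xI: "\<forall>j<k. x j \<in> {a..b}" and inj: "unisolvent v k x" by auto
  have "\<exists>y\<in>{a..b}. unisolvent v (Suc k) (x(k := y))"
  proof (rule ccontr)
    assume "\<not> (\<exists>y\<in>{a..b}. unisolvent v (Suc k) (x(k := y)))"
    then have dep: "\<exists>e. e k = 1 \<and> (\<forall>j<k. (\<Sum>i<Suc k. e i * v i (x j)) = 0) \<and> (\<Sum>i<Suc k. e i * v i y) = 0"
      if "y \<in> {a..b}" for y
      using not_unisolvent_Suc[OF inj] that by blast
    obtain e0 where e0: "e0 k = 1" "\<forall>j<k. (\<Sum>i<Suc k. e0 i * v i (x j)) = 0"
      using dep[of a] \<open>a \<le> b\<close> by auto
    define \<gamma> where "\<gamma> i = (if i \<le> k then e0 i else 0)" for i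
    have "(\<Sum>i<N. \<gamma> i * v i y) = 0" if y: "y \<in> {a..b}" for y
    proof -
      obtain e where e: "e k = 1" "\<forall>j<k. (\<Sum>i<Suc k. e i * v i (x j)) = 0"
        and e_y: "(\<Sum>i<Suc k. e i * v i y) = 0"
        using dep[OF y] by blast
      have "\<gamma> i = e i" if i: "i < Suc k" for i
      proof (cases "i = k")
        case False
        with i have "i < k" by simp
        then have "e0 i = e i"
          by (intro unisolvent_dependency_unique[where e=e0 and e'=e, OF inj e0(1) _ e(1)])
            (use e0(2) e(2) in auto)
        with \<open>i < k\<close> show ?thesis by (simp add: \<gamma>_def)
      qed (simp add: \<gamma>_def e0(1) e(1))
      then have "(\<Sum>i<Suc k. \<gamma> i * v i y) = 0" using e_y by simp
      moreover have "(\<Sum>i<N. \<gamma> i * v i y) = (\<Sum>i<Suc k. \<gamma> i * v i y)"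
        by (rule sum.mono_neutral_right) (use Suc.prems in \<open>auto simp: \<gamma>_def\<close>)
      ultimately show ?thesis by simp
    qed
    then have "\<gamma> k = 0" using indep Suc.prems by auto
    then show False using e0(1) by (simp add: \<gamma>_def)
  qed
  then obtain y where y: "y \<in> {a..b}" "unisolvent v (Suc k) (x(k := y))" by blast
  have "\<forall>j<Suc k. (x(k := y)) j \<in> {a..b}" using xI y(1) by (auto simp: less_Suc_eq)
  with y(2) show ?case by blast
qed

lemma unisolvent_det_nonzero:
  assumes inj: "unisolvent v N x"
  shows "det (mat N N (\<lambda>(j, i). v i (x j))) \<noteq> 0"
proof
  define V where "V = mat N N (\<lambda>(j, i). v i (x j))"
  have V: "V \<in> carrier_mat N N" unfolding V_def by simp
  assume "det (mat N N (\<lambda>(j, i). v i (x j))) = 0"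
  then obtain w where w: "w \<in> carrier_vec N" "w \<noteq> 0\<^sub>v N" "V *\<^sub>v w = 0\<^sub>v N"
    using det_0_iff_vec_prod_zero_field[OF V] unfolding V_def by blast
  have "(\<Sum>i<N. w $ i * v i (x j)) = 0" if "j < N" for j
    using arg_cong[OF w(3), of "\<lambda>u. u $ j"] that w(1) unfolding V_def
    by (simp add: scalar_prod_def atLeast0LessThan mult.commute)
  then have "\<forall>i<N. w $ i = 0" using inj unfolding unisolvent_def by blast
  then have "w = 0\<^sub>v N" using w(1) by (intro eq_vecI) auto
  then show False using w(2) by simp
qed

lemma unisolvent_coeffs_bound:
  assumes inj: "unisolvent v N x"
  shows "\<exists>K>0. \<forall>c B. 0 \<le> B \<longrightarrow> (\<forall>j<N. \<bar>\<Sum>i<N. c i * v i (x j)\<bar> \<le> B) \<longrightarrow> (\<Sum>i<N. \<bar>c i\<bar>) \<le> K * B"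
proof -
  define V where "V = mat N N (\<lambda>(j, i). v i (x j))"
  have V: "V \<in> carrier_mat N N" unfolding V_def by simp
  have "det V \<noteq> 0" unfolding V_def by (rule unisolvent_det_nonzero[OF inj])
  then obtain C where C: "\<forall>i<N. \<forall>l<N. (\<Sum>j<N. C i j * V $$ (j, l)) = (if i = l then 1 else 0)"
    using det_nonzero_inverse_coeffs[OF V] by blast
  define K where "K = (\<Sum>i<N. \<Sum>j<N. \<bar>C i j\<bar>) + 1"
  have K: "0 < K" unfolding K_def by (intro add_nonneg_pos sum_nonneg) auto
  have "(\<Sum>i<N. \<bar>c i\<bar>) \<le> K * B"
    if B: "0 \<le> B" "\<forall>j<N. \<bar>\<Sum>i<N. c i * v i (x j)\<bar> \<le> B" for c B
  proof -
    have c_eq: "c i = (\<Sum>j<N. C i j * (\<Sum>l<N. c l * v l (x j)))" if i: "i < N" for i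
    proof -
      have "(\<Sum>j<N. C i j * (\<Sum>l<N. c l * v l (x j))) = (\<Sum>j<N. \<Sum>l<N. C i j * V $$ (j, l) * c l)"
        unfolding V_def by (simp add: sum_distrib_left mult_ac)
      also have "\<dots> = (\<Sum>l<N. \<Sum>j<N. C i j * V $$ (j, l) * c l)" by (rule sum.swap)
      also have "\<dots> = (\<Sum>l<N. (\<Sum>j<N. C i j * V $$ (j, l)) * c l)" by (simp add: sum_distrib_right)
      also have "\<dots> = c i" using C i by (simp add: sum_if_eq_mult)
      finally show ?thesis ..
    qed
    have ci: "\<bar>c i\<bar> \<le> (\<Sum>j<N. \<bar>C i j\<bar>) * B" if "i < N" for i
    proof -
      have "\<bar>c i\<bar> \<le> (\<Sum>j<N. \<bar>C i j\<bar> * \<bar>\<Sum>l<N. c l * v l (x j)\<bar>)"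
        unfolding c_eq[OF that] by (rule order_trans[OF sum_abs]) (simp add: abs_mult)
      also have "\<dots> \<le> (\<Sum>j<N. \<bar>C i j\<bar> * B)" using B by (intro sum_mono mult_left_mono) auto
      finally show ?thesis by (simp add: sum_distrib_right)
    qed
    have "(\<Sum>i<N. \<bar>c i\<bar>) \<le> (\<Sum>i<N. (\<Sum>j<N. \<bar>C i j\<bar>) * B)"
      using ci by (intro sum_mono) auto
    also have "\<dots> = (\<Sum>i<N. \<Sum>j<N. \<bar>C i j\<bar>) * B" by (simp add: sum_distrib_right)
    also have "\<dots> \<le> K * B" unfolding K_def using B by (intro mult_right_mono) auto
    finally show ?thesis .
  qed
  with K show ?thesis by blast
qed

lemma lincomb_coeffs_le_Cnorm:
  fixes N :: nat
  assumes ab: "a < b" and Dv: "\<And>j. j < N \<Longrightarrow> has_derivs_on {a..b} n (v j) (Dv j)"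
    and indep: "\<forall>c. (\<forall>x\<in>{a..b}. (\<Sum>i<N. c i * v i x) = 0) \<longrightarrow> (\<forall>i<N. c i = 0)"
  shows "\<exists>K>0. \<forall>c. (\<Sum>i<N. \<bar>c i\<bar>) \<le> K * Cnorm a b n (\<lambda>x. \<Sum>i<N. c i * v i x)"
proof -
  obtain x where xI: "\<forall>j<N. x j \<in> {a..b}" and inj: "unisolvent v N x"
    using exists_unisolvent_points[OF less_imp_le[OF ab] indep, of N] by auto
  obtain K where K: "0 < K" and
    bound: "\<And>c B. 0 \<le> B \<Longrightarrow> (\<forall>j<N. \<bar>\<Sum>i<N. c i * v i (x j)\<bar> \<le> B) \<Longrightarrow> (\<Sum>i<N. \<bar>c i\<bar>) \<le> K * B"
    using unisolvent_coeffs_bound[OF inj] by blast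
  have "(\<Sum>i<N. \<bar>c i\<bar>) \<le> K * Cnorm a b n (\<lambda>x. \<Sum>i<N. c i * v i x)" for c
  proof (rule bound)
    have D: "has_derivs_on {a..b} n (\<lambda>x. \<Sum>i<N. c i * v i x) (\<lambda>l y. \<Sum>i<N. c i * Dv i l y)"
      by (intro has_derivs_on_sum Dv)
    then show "0 \<le> Cnorm a b n (\<lambda>x. \<Sum>i<N. c i * v i x)" by (rule Cnorm_nonneg[OF ab])
    show "\<forall>j<N. \<bar>\<Sum>i<N. c i * v i (x j)\<bar> \<le> Cnorm a b n (\<lambda>x. \<Sum>i<N. c i * v i x)"
    proof (intro allI impI)
      fix j assume "j < N"
      then have "x j \<in> {a..b}" using xI by blast
      then have "(\<Sum>i<N. c i * Dv i 0 (x j)) = (\<Sum>i<N. c i * v i (x j))"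
        using D unfolding has_derivs_on_def by blast
      then show "\<bar>\<Sum>i<N. c i * v i (x j)\<bar> \<le> Cnorm a b n (\<lambda>x. \<Sum>i<N. c i * v i x)"
        using Cnorm_ge_deriv[OF ab D, of 0 "x j"] \<open>x j \<in> {a..b}\<close> by simp
    qed
  qed
  with K show ?thesis by blast
qed

lemma Cnorm_lincomb_diff_le:
  fixes N :: nat
  assumes ab: "a < b"
    and Du: "\<And>j. j < N \<Longrightarrow> has_derivs_on {a..b} n (u j) (Du j)"
    and Dw: "\<And>j. j < N \<Longrightarrow> has_derivs_on {a..b} n (w j) (Dw j)"
    and close: "\<And>j i x. j < N \<Longrightarrow> i \<le> n \<Longrightarrow> x \<in> {a..b} \<Longrightarrow> \<bar>Du j i x - Dw j i x\<bar> \<le> e"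
  shows "Cnorm a b n (\<lambda>x. (\<Sum>j<N. c j * u j x) - (\<Sum>j<N. c j * w j x)) \<le> e * (\<Sum>j<N. \<bar>c j\<bar>)"
proof (rule Cnorm_le[OF ab])
  show "has_derivs_on {a..b} n (\<lambda>x. (\<Sum>j<N. c j * u j x) - (\<Sum>j<N. c j * w j x))
      (\<lambda>i x. (\<Sum>j<N. c j * Du j i x) - (\<Sum>j<N. c j * Dw j i x))"
    by (intro has_derivs_on_diff has_derivs_on_sum Du Dw)
next
  fix i x assume "i \<le> n" "x \<in> {a..b}"
  have "\<bar>(\<Sum>j<N. c j * Du j i x) - (\<Sum>j<N. c j * Dw j i x)\<bar> = \<bar>\<Sum>j<N. c j * (Du j i x - Dw j i x)\<bar>"
    by (simp add: sum_subtractf right_diff_distrib)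
  also have "\<dots> \<le> (\<Sum>j<N. \<bar>c j\<bar> * e)"
    by (rule order_trans[OF sum_abs], rule sum_mono)
      (use close \<open>i \<le> n\<close> \<open>x \<in> {a..b}\<close> in \<open>auto simp: abs_mult intro!: mult_left_mono\<close>)
  finally show "\<bar>(\<Sum>j<N. c j * Du j i x) - (\<Sum>j<N. c j * Dw j i x)\<bar> \<le> e * (\<Sum>j<N. \<bar>c j\<bar>)"
    by (simp add: sum_distrib_left mult.commute)
qed

lemma lincomb_coeffs_bound_transfer:
  fixes N :: nat
  assumes ab: "a < b"
    and Du: "\<And>j. j < N \<Longrightarrow> has_derivs_on {a..b} n (u j) (Du j)"
    and Dw: "\<And>j. j < N \<Longrightarrow> has_derivs_on {a..b} n (w j) (Dw j)"
    and close: "\<And>j i x. j < N \<Longrightarrow> i \<le> n \<Longrightarrow> x \<in> {a..b} \<Longrightarrow> \<bar>Du j i x - Dw j i x\<bar> \<le> e"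
    and K: "0 < K" and Ke: "2 * K * e \<le> 1"
    and coeffs: "\<And>c. (\<Sum>j<N. \<bar>c j\<bar>) \<le> K * Cnorm a b n (\<lambda>x. \<Sum>j<N. c j * u j x)"
  shows "(\<Sum>j<N. \<bar>c j\<bar>) \<le> 2 * K * Cnorm a b n (\<lambda>x. \<Sum>j<N. c j * w j x)"
proof -
  let ?S = "\<Sum>j<N. \<bar>c j\<bar>"
  have hw: "has_derivs_on {a..b} n (\<lambda>x. \<Sum>j<N. c j * w j x) (\<lambda>i x. \<Sum>j<N. c j * Dw j i x)"
    by (intro has_derivs_on_sum Dw)
  have huw: "has_derivs_on {a..b} n (\<lambda>x. (\<Sum>j<N. c j * u j x) - (\<Sum>j<N. c j * w j x))
      (\<lambda>i x. (\<Sum>j<N. c j * Du j i x) - (\<Sum>j<N. c j * Dw j i x))"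
    by (intro has_derivs_on_diff has_derivs_on_sum Du Dw)
  have "Cnorm a b n (\<lambda>x. \<Sum>j<N. c j * u j x) \<le>
        Cnorm a b n (\<lambda>x. \<Sum>j<N. c j * w j x) +
        Cnorm a b n (\<lambda>x. (\<Sum>j<N. c j * u j x) - (\<Sum>j<N. c j * w j x))"
    using Cnorm_add_le[OF ab hw huw] by simp
  also have "\<dots> \<le> Cnorm a b n (\<lambda>x. \<Sum>j<N. c j * w j x) + e * ?S"
    by (intro add_left_mono Cnorm_lincomb_diff_le[OF ab Du Dw close])
  finally have U: "Cnorm a b n (\<lambda>x. \<Sum>j<N. c j * u j x) \<le> Cnorm a b n (\<lambda>x. \<Sum>j<N. c j * w j x) + e * ?S" .
  have "?S \<le> K * Cnorm a b n (\<lambda>x. \<Sum>j<N. c j * u j x)" by (rule coeffs)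
  also have "\<dots> \<le> K * (Cnorm a b n (\<lambda>x. \<Sum>j<N. c j * w j x) + e * ?S)"
    using U K by (intro mult_left_mono) auto
  also have "\<dots> = K * Cnorm a b n (\<lambda>x. \<Sum>j<N. c j * w j x) + (K * e) * ?S"
    by (simp add: distrib_left mult.assoc)
  finally have "?S \<le> K * Cnorm a b n (\<lambda>x. \<Sum>j<N. c j * w j x) + (K * e) * ?S" .
  moreover have "(K * e) * ?S \<le> (1 / 2) * ?S" using Ke by (intro mult_right_mono) auto
  ultimately show ?thesis by linarith
qed

lemma lspan_unit_ball_approx:
  assumes ab: "a < b"
    and Du: "\<And>j. j < N \<Longrightarrow> has_derivs_on {a..b} n (u j) (Du j)"
    and Dw: "\<And>j. j < N \<Longrightarrow> has_derivs_on {a..b} n (w j) (Dw j)"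
    and close: "\<And>j i x. j < N \<Longrightarrow> i \<le> n \<Longrightarrow> x \<in> {a..b} \<Longrightarrow> \<bar>Du j i x - Dw j i x\<bar> \<le> e"
    and e: "0 \<le> e" and L: "0 \<le> L"
    and coeffs: "\<And>c. (\<Sum>j<N. \<bar>c j\<bar>) \<le> L * Cnorm a b n (\<lambda>x. \<Sum>j<N. c j * u j x)"
    and f: "f \<in> unit_ball_C a b n (lspan N u)"
  shows "\<exists>g\<in>unit_ball_C a b n (lspan N w). Cnorm a b n (\<lambda>x. f x - g x) \<le> 2 * L * e"
proof -
  obtain c where fc: "f = (\<lambda>x. \<Sum>j<N. c j * u j x)" and f1: "Cnorm a b n f \<le> 1"
    using f unfolding unit_ball_C_def mem_lspan by blast
  define r where "r = Cnorm a b n (\<lambda>x. f x - (\<Sum>j<N. c j * w j x))"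
  have "r \<le> e * (\<Sum>j<N. \<bar>c j\<bar>)"
    unfolding r_def fc by (rule Cnorm_lincomb_diff_le[OF ab Du Dw close])
  also have "\<dots> \<le> e * (L * Cnorm a b n f)" unfolding fc using coeffs e by (rule mult_left_mono)
  also have "\<dots> \<le> e * L" using f1 e L by (intro mult_left_mono) (auto simp: mult_left_le)
  finally have r: "r \<le> L * e" by (simp add: mult.commute)
  define g where "g = (\<lambda>x. (\<Sum>j<N. c j * w j x) / (1 + r))"
  have "g \<in> lspan N w"
    unfolding mem_lspan g_def by (intro exI[of _ "\<lambda>j. c j / (1 + r)"]) (simp add: sum_divide_distrib)
  moreover have "has_derivs_on {a..b} n f (\<lambda>i x. \<Sum>j<N. c j * Du j i x)"
    unfolding fc by (intro has_derivs_on_sum Du)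
  moreover have "has_derivs_on {a..b} n (\<lambda>x. \<Sum>j<N. c j * w j x) (\<lambda>i x. \<Sum>j<N. c j * Dw j i x)"
    by (intro has_derivs_on_sum Dw)
  note Cnorm_rescale_into_unit_ball[OF ab calculation(2) this f1, folded r_def]
  ultimately have "g \<in> unit_ball_C a b n (lspan N w)" "Cnorm a b n (\<lambda>x. f x - g x) \<le> 2 * r"
    unfolding unit_ball_C_def g_def by auto
  with r show ?thesis by force
qed

lemma SUP_INF_le:
  fixes \<phi> :: "'a \<Rightarrow> 'b \<Rightarrow> real"
  assumes A: "A \<noteq> {}" and B: "B \<noteq> {}" and nn: "\<And>f g. f \<in> A \<Longrightarrow> g \<in> B \<Longrightarrow> 0 \<le> \<phi> f g"
    and ex: "\<And>f. f \<in> A \<Longrightarrow> \<exists>g\<in>B. \<phi> f g \<le> r"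
  shows "0 \<le> (SUP f\<in>A. INF g\<in>B. \<phi> f g) \<and> (SUP f\<in>A. INF g\<in>B. \<phi> f g) \<le> r"
proof -
  have bb: "bdd_below (\<phi> f ` B)" if "f \<in> A" for f
    using nn[OF that] by (auto simp: bdd_below_def)
  have le: "(INF g\<in>B. \<phi> f g) \<le> r" if f: "f \<in> A" for f
  proof -
    obtain g where "g \<in> B" "\<phi> f g \<le> r" using ex[OF f] by blast
    then show ?thesis by (rule cINF_lower2[OF bb[OF f]])
  qed
  have ge: "0 \<le> (INF g\<in>B. \<phi> f g)" if "f \<in> A" for f
    by (rule cINF_greatest[OF B]) (use nn that in auto)
  have bdd: "bdd_above ((\<lambda>f. INF g\<in>B. \<phi> f g) ` A)" using le by (auto simp: bdd_above_def)
  obtain f0 where f0: "f0 \<in> A" using A by blast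
  have "0 \<le> (SUP f\<in>A. INF g\<in>B. \<phi> f g)" using cSUP_upper2[OF bdd f0 ge[OF f0]] .
  moreover have "(SUP f\<in>A. INF g\<in>B. \<phi> f g) \<le> r" by (rule cSUP_least[OF A le])
  ultimately show ?thesis by blast
qed

lemma hausdorff_C_le:
  assumes A: "A \<noteq> {}" and B: "B \<noteq> {}"
    and nn: "\<And>f g. f \<in> A \<Longrightarrow> g \<in> B \<Longrightarrow> 0 \<le> Cnorm a b k (\<lambda>x. f x - g x)"
    and AB: "\<And>f. f \<in> A \<Longrightarrow> \<exists>g\<in>B. Cnorm a b k (\<lambda>x. f x - g x) \<le> r"
    and BA: "\<And>g. g \<in> B \<Longrightarrow> \<exists>f\<in>A. Cnorm a b k (\<lambda>x. f x - g x) \<le> r"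
  shows "0 \<le> hausdorff_C a b k A B \<and> hausdorff_C a b k A B \<le> r"
proof -
  have "0 \<le> (SUP f\<in>A. INF g\<in>B. Cnorm a b k (\<lambda>x. f x - g x)) \<and>
        (SUP f\<in>A. INF g\<in>B. Cnorm a b k (\<lambda>x. f x - g x)) \<le> r"
    by (rule SUP_INF_le[OF A B]) (use nn AB in auto)
  moreover have "0 \<le> (SUP g\<in>B. INF f\<in>A. Cnorm a b k (\<lambda>x. f x - g x)) \<and>
        (SUP g\<in>B. INF f\<in>A. Cnorm a b k (\<lambda>x. f x - g x)) \<le> r"
    by (rule SUP_INF_le[OF B A]) (use nn BA in auto)
  ultimately show ?thesis unfolding hausdorff_C_def by auto
qed

lemma zero_in_unit_ball_lspan:
  assumes ab: "a < b" and Dv: "\<And>j. j < N \<Longrightarrow> has_derivs_on {a..b} n (v j) (Dv j)"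
  shows "(\<lambda>x. 0) \<in> unit_ball_C a b n (lspan N v)"
proof -
  have "has_derivs_on {a..b} n (\<lambda>x. \<Sum>j<N. 0 * v j x) (\<lambda>i x. \<Sum>j<N. 0 * Dv j i x)"
    by (rule has_derivs_on_sum) (rule Dv)
  then have "Cnorm a b n (\<lambda>x. \<Sum>j<N. 0 * v j x) \<le> 1" by (rule Cnorm_le[OF ab]) simp
  moreover have "(\<lambda>x. \<Sum>j<N. 0 * v j x) \<in> lspan N v"
    unfolding mem_lspan by (rule exI[of _ "\<lambda>_. 0"]) (rule refl)
  ultimately show ?thesis unfolding unit_ball_C_def by simp
qed

lemma unit_ball_lspan_has_derivs_on:
  assumes Dv: "\<And>j. j < N \<Longrightarrow> has_derivs_on {a..b} n (v j) (Dv j)"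
    and "f \<in> unit_ball_C a b n (lspan N v)"
  shows "\<exists>D. has_derivs_on {a..b} n f D"
proof -
  from assms(2) obtain c where "f = (\<lambda>x. \<Sum>j<N. c j * v j x)"
    unfolding unit_ball_C_def mem_lspan by blast
  moreover have "has_derivs_on {a..b} n (\<lambda>x. \<Sum>j<N. c j * v j x) (\<lambda>i x. \<Sum>j<N. c j * Dv j i x)"
    by (rule has_derivs_on_sum) (rule Dv)
  ultimately show ?thesis by blast
qed

lemma hausdorff_C_lspan_le:
  assumes ab: "a < b"
    and Du: "\<And>j. j < N \<Longrightarrow> has_derivs_on {a..b} n (u j) (Du j)"
    and Dw: "\<And>j. j < N \<Longrightarrow> has_derivs_on {a..b} n (w j) (Dw j)"
    and close: "\<And>j i x. j < N \<Longrightarrow> i \<le> n \<Longrightarrow> x \<in> {a..b} \<Longrightarrow> \<bar>Du j i x - Dw j i x\<bar> \<le> e"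
    and e: "0 \<le> e" and L: "0 \<le> L"
    and coeffs_u: "\<And>c. (\<Sum>j<N. \<bar>c j\<bar>) \<le> L * Cnorm a b n (\<lambda>x. \<Sum>j<N. c j * u j x)"
    and coeffs_w: "\<And>c. (\<Sum>j<N. \<bar>c j\<bar>) \<le> L * Cnorm a b n (\<lambda>x. \<Sum>j<N. c j * w j x)"
  shows "0 \<le> hausdorff_C a b n (unit_ball_C a b n (lspan N u)) (unit_ball_C a b n (lspan N w)) \<and>
         hausdorff_C a b n (unit_ball_C a b n (lspan N u)) (unit_ball_C a b n (lspan N w)) \<le> 2 * L * e"
proof (rule hausdorff_C_le)
  show "unit_ball_C a b n (lspan N u) \<noteq> {}"
    using zero_in_unit_ball_lspan[where v=u and Dv=Du, OF ab Du] by blast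
  show "unit_ball_C a b n (lspan N w) \<noteq> {}"
    using zero_in_unit_ball_lspan[where v=w and Dv=Dw, OF ab Dw] by blast
  show "0 \<le> Cnorm a b n (\<lambda>x. f x - g x)"
    if f: "f \<in> unit_ball_C a b n (lspan N u)" and g: "g \<in> unit_ball_C a b n (lspan N w)" for f g
  proof -
    obtain Df Dg where "has_derivs_on {a..b} n f Df" "has_derivs_on {a..b} n g Dg"
      using unit_ball_lspan_has_derivs_on[where v=u and Dv=Du, OF Du f]
        unit_ball_lspan_has_derivs_on[where v=w and Dv=Dw, OF Dw g] by blast
    then have "has_derivs_on {a..b} n (\<lambda>x. f x - g x) (\<lambda>i x. Df i x - Dg i x)"
      by (rule has_derivs_on_diff)
    then show ?thesis by (rule Cnorm_nonneg[OF ab])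
  qed
  show "\<exists>g\<in>unit_ball_C a b n (lspan N w). Cnorm a b n (\<lambda>x. f x - g x) \<le> 2 * L * e"
    if "f \<in> unit_ball_C a b n (lspan N u)" for f
    by (rule lspan_unit_ball_approx[where Du=Du and Dw=Dw, OF ab Du Dw close e L coeffs_u that])
  show "\<exists>f\<in>unit_ball_C a b n (lspan N u). Cnorm a b n (\<lambda>x. f x - g x) \<le> 2 * L * e"
    if g: "g \<in> unit_ball_C a b n (lspan N w)" for g
  proof -
    have "\<bar>Dw j i x - Du j i x\<bar> \<le> e" if "j < N" "i \<le> n" "x \<in> {a..b}" for j i x
      using close[OF that] by (simp add: abs_minus_commute)
    from lspan_unit_ball_approx[where Du=Dw and Dw=Du, OF ab Dw Du this e L coeffs_w g]
    obtain f where f: "f \<in> unit_ball_C a b n (lspan N u)" "Cnorm a b n (\<lambda>x. g x - f x) \<le> 2 * L * e"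
      by blast
    obtain Df Dg where "has_derivs_on {a..b} n f Df" "has_derivs_on {a..b} n g Dg"
      using unit_ball_lspan_has_derivs_on[where v=u and Dv=Du, OF Du f(1)]
        unit_ball_lspan_has_derivs_on[where v=w and Dv=Dw, OF Dw g] by blast
    then have "Cnorm a b n (\<lambda>x. f x - g x) = Cnorm a b n (\<lambda>x. g x - f x)"
      by (rule Cnorm_minus_commute[OF ab])
    with f(2) have "Cnorm a b n (\<lambda>x. f x - g x) \<le> 2 * L * e" by simp
    with f(1) show ?thesis by blast
  qed
qed

lemma exists_piecewise_ECT_subspace_near:
  assumes ab: "a < b" and X: "dim_subspace a b N X" and e: "0 < e"
  shows "\<exists>Y. dim_subspace a b N Y \<and> piecewise_ECT a b N Y \<and>
             0 \<le> hausdorff_C a b (N - 1) (unit_ball_C a b (N - 1) Y) (unit_ball_C a b (N - 1) X) \<and>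
             hausdorff_C a b (N - 1) (unit_ball_C a b (N - 1) Y) (unit_ball_C a b (N - 1) X) \<le> e"
proof -
  obtain v where vC: "\<forall>i<N. v i \<in> Cspace a b (N - 1)"
    and indep: "\<forall>c. (\<forall>x\<in>{a..b}. (\<Sum>i<N. c i * v i x) = 0) \<longrightarrow> (\<forall>i<N. c i = 0)"
    and X_eq: "X = lspan N v"
    using X unfolding dim_subspace_def lspan_def by blast
  have "\<forall>i. \<exists>D. i < N \<longrightarrow> has_derivs_on {a..b} (N - 1) (v i) D"
    using vC unfolding Cspace_def by blast
  then obtain Dv where Dv: "\<And>i. i < N \<Longrightarrow> has_derivs_on {a..b} (N - 1) (v i) (Dv i)"
    by metis
  obtain K where K: "0 < K"
    and Kv: "\<And>c. (\<Sum>i<N. \<bar>c i\<bar>) \<le> K * Cnorm a b (N - 1) (\<lambda>x. \<Sum>i<N. c i * v i x)"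
    using lincomb_coeffs_le_Cnorm[where Dv=Dv, OF ab Dv indep] by blast
  \<comment> \<open>\<open>2 K \<eta> \<le> 1\<close> lets the coefficient bound pass to the polynomial basis with constant
    \<open>2 K\<close>; the Hausdorff distance is then at most \<open>4 K \<eta>\<close>.\<close>
  define \<eta> where "\<eta> = min (1 / (2 * K)) (e / (4 * K))"
  have \<eta>: "0 < \<eta>" "2 * K * \<eta> \<le> 1" "2 * (2 * K) * \<eta> \<le> e"
    using K e by (auto simp: \<eta>_def min_def field_simps)
  obtain Q
    where Q: "\<forall>j<N. \<forall>i\<le>N - 1. \<forall>x\<in>{a..b}. \<bar>Dv j i x - poly ((pderiv ^^ i) (Q j)) (x - a)\<bar> \<le> \<eta>"
    and det: "det (jet_mat N Q) \<noteq> 0"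
    using poly_approx_family[where v=v and Dv=Dv, OF ab Dv \<eta>(1)] by blast
  let ?u = "\<lambda>j. poly_on a b (Q j)" and ?Du = "\<lambda>j i x. poly ((pderiv ^^ i) (Q j)) (x - a)"
  have Du: "has_derivs_on {a..b} (N - 1) (?u j) (?Du j)" for j by (rule has_derivs_on_poly_on)
  have close: "\<bar>?Du j i x - Dv j i x\<bar> \<le> \<eta>" if "j < N" "i \<le> N - 1" "x \<in> {a..b}" for j i x
    using Q that by (simp add: abs_minus_commute)
  have Ku: "(\<Sum>j<N. \<bar>c j\<bar>) \<le> 2 * K * Cnorm a b (N - 1) (\<lambda>x. \<Sum>j<N. c j * ?u j x)" for c
    using Q
    by (intro lincomb_coeffs_bound_transfer[where Du=Dv and Dw="?Du", OF ab Dv Du _ K \<eta>(2) Kv]) auto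
  have Kv2: "(\<Sum>j<N. \<bar>c j\<bar>) \<le> 2 * K * Cnorm a b (N - 1) (\<lambda>x. \<Sum>j<N. c j * v j x)" for c
  proof -
    have "0 \<le> Cnorm a b (N - 1) (\<lambda>x. \<Sum>j<N. c j * v j x)"
      by (rule Cnorm_nonneg[OF ab, where D="\<lambda>i x. \<Sum>j<N. c j * Dv j i x"])
        (intro has_derivs_on_sum Dv)
    then show ?thesis using Kv[of c] K by (smt (verit) mult_right_mono)
  qed
  let ?h = "hausdorff_C a b (N - 1) (unit_ball_C a b (N - 1) (lspan N ?u)) (unit_ball_C a b (N - 1) X)"
  have "0 \<le> ?h \<and> ?h \<le> 2 * (2 * K) * \<eta>"
    unfolding X_eq using K \<eta>(1)
    by (intro hausdorff_C_lspan_le[where Du="?Du" and Dw=Dv, OF ab Du Dv close _ _ Ku Kv2]) auto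
  with \<eta>(3) dim_subspace_lspan_poly_on[OF ab det] piecewise_ECT_lspan_poly_on[OF ab det]
  show ?thesis by (intro exI[of _ "lspan N ?u"]) auto
qed

theorem mainTheorem1:
  fixes a b :: real and N :: nat and X :: "(real \<Rightarrow> real) set"
  assumes "a < b" and "N \<ge> 1" and "dim_subspace a b N X"
  shows "\<exists>Xs :: nat \<Rightarrow> (real \<Rightarrow> real) set.
           (\<forall>m. dim_subspace a b N (Xs m)) \<and>
           (\<forall>m. \<exists>(p::nat) (t::nat \<Rightarrow> real).
                  t 0 = a \<and> t p = b \<and> (\<forall>j<p. t j < t (Suc j)) \<and>
                  (\<forall>j<p. ECT_restr a b N (Xs m) {t j<..<t (Suc j)})) \<and>
           (\<lambda>m. hausdorff_C a b (N - 1) (unit_ball_C a b (N - 1) (Xs m))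
                                        (unit_ball_C a b (N - 1) X)) \<longlonglongrightarrow> 0"
proof -
  let ?h = "\<lambda>Y. hausdorff_C a b (N - 1) (unit_ball_C a b (N - 1) Y) (unit_ball_C a b (N - 1) X)"
  have "\<forall>m. \<exists>Y. dim_subspace a b N Y \<and> piecewise_ECT a b N Y \<and>
      0 \<le> ?h Y \<and> ?h Y \<le> inverse (real (Suc m))"
    using exists_piecewise_ECT_subspace_near[OF assms(1) assms(3)] by simp
  then obtain Xs where Xs: "\<forall>m. dim_subspace a b N (Xs m) \<and> piecewise_ECT a b N (Xs m) \<and>
      0 \<le> ?h (Xs m) \<and> ?h (Xs m) \<le> inverse (real (Suc m))"
    by (metis choice)
  have "(\<lambda>m. ?h (Xs m)) \<longlonglongrightarrow> 0"
    by (rule tendsto_sandwich[OF _ _ tendsto_const LIMSEQ_inverse_real_of_nat]) (use Xs in auto)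
  with Xs show ?thesis unfolding piecewise_ECT_def by blast
qed

end
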